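(* Let $\tau_1,\tau_2,\dots$ be i.i.d. nonnegative random variables with an absolutely continuous distribution whose support contains $[0,1+\epsilon]$ for some $\epsilon>0$, with cdf $F_\tau$ and pdf $f_\tau$. Let $T_0=0$, $T_k=(\sum_{i=1}^k\tau_i)\wedge1$ for $k\ge1$, $N=\max\{k:T_k<1\}$, $T_{N+1}\equiv1$, and $\Delta^T_k=T_k-T_{k-1}$. Then for any $C>0$, $$\mathbf{E}\Big[\frac{C^N}{1-F_\tau(\Delta^T_{N+1})}\prod_{k=1}^N\frac{1}{f_\tau(\Delta^T_k)(\Delta^T_{k+1})^{1/2}}\Big]<\infty.$$ *)

theory Defs
  imports "HOL-Probability.Probability"
begin

definition rv_support :: "'a measure \<Rightarrow> ('a \<Rightarrow> real) \<Rightarrow> real set" where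
  "rv_support M X = {x. \<forall>e>0. measure M {\<omega> \<in> space M. X \<omega> \<in> ball x e} > 0}"

definition renewal_T :: "(nat \<Rightarrow> 'a \<Rightarrow> real) \<Rightarrow> nat \<Rightarrow> 'a \<Rightarrow> real" where
  "renewal_T \<tau> k \<omega> = min (\<Sum>i=1..k. \<tau> i \<omega>) 1"

definition renewal_N :: "(nat \<Rightarrow> 'a \<Rightarrow> real) \<Rightarrow> 'a \<Rightarrow> nat" where
  "renewal_N \<tau> \<omega> = Max {k. renewal_T \<tau> k \<omega> < 1}"

definition renewal_Delta :: "(nat \<Rightarrow> 'a \<Rightarrow> real) \<Rightarrow> nat \<Rightarrow> 'a \<Rightarrow> real" where
  "renewal_Delta \<tau> k \<omega> = renewal_T \<tau> k \<omega> - renewal_T \<tau> (k - 1) \<omega>"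

end

theory Submission
  imports Defs
begin

(*
  On the event {N = n} the integrand is a function of tau_1, ..., tau_(n+1), namely of
  x_k = tau_k.  Integrating out x_(n+1) over its admissible range [1 - S_n, oo), where
  S_n = x_1 + ... + x_n, produces exactly the tail 1 - F(Delta_(n+1)) of the denominator,
  and every factor 1 / f(Delta_k) = 1 / f(x_k) cancels the density of x_k.  As
  Delta_(k+1) = x_(k+1) for k < n, Delta_(n+1) = 1 - S_n and x_1^(-1/2) >= 1, what is left
  is at most C^n times the Dirichlet integral of
    x_1^(-1/2) ... x_n^(-1/2) (1 - S_n)^(-1/2)
  over the simplex S_n < 1.  Integrating one coordinate at a time against a Beta kernel
  evaluates it as K_n = B(1/2, 1/2) B(1/2, 1) ... B(1/2, n/2), and the duplication
  identity B(1/2, b) B(1/2, b + 1/2) = pi / b gives K_(n+1) / K_n = O(n^(-1/2)), so that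
  sum_n C^n K_n converges.  Almost surely every tau_k is positive and the partial sums
  reach 1 (the support assumption gives P(tau_1 <= 1) < 1), so the integrand is a.s.
  dominated by the sum over n of these terms.
*)

lemma Beta_real_pos:
  fixes a b :: real
  assumes "a > 0" "b > 0"
  shows "Beta a b > 0"
  using assms by (simp add: Beta_def Gamma_real_pos)

lemma nn_integral_powr_Beta:
  fixes R a :: real
  assumes R: "R > 0" and a: "a > -1"
  shows "(\<integral>\<^sup>+y. indicator {0<..<R} y * ennreal (y powr (-1/2) * (R - y) powr a) \<partial>lborel)
         = ennreal (Beta (1/2) (a + 1) * R powr (a + 1/2))"
proof -
  have "((\<lambda>t. t powr (-1/2) * (1 - t) powr a) has_integral Beta (1/2) (a + 1)) {0..1}"
    using has_integral_Beta_real[of "1/2" "a + 1"] a by simp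
  then have Beta: "(\<integral>\<^sup>+t. ennreal (indicator {0..1} t * (t powr (-1/2) * (1 - t) powr a)) \<partial>lborel)
      = ennreal (Beta (1/2) (a + 1))"
    by (rule nn_integral_has_integral_lebesgue[rotated]) auto
  have rescale: "indicator {0<..<R} (R * t) * ennreal ((R * t) powr (-1/2) * (R - R * t) powr a)
      = ennreal (R powr (a - 1/2)) * ennreal (indicator {0..1} t * (t powr (-1/2) * (1 - t) powr a))"
    for t
  proof (cases "0 < t \<and> t < 1")
    case True
    have "R - R * t = R * (1 - t)" by (simp add: algebra_simps)
    moreover have "R powr (a - 1/2) = R powr (-1/2) * R powr a"
      by (simp add: powr_add[symmetric])
    ultimately have "(R * t) powr (-1/2) * (R - R * t) powr a
        = R powr (a - 1/2) * (t powr (-1/2) * (1 - t) powr a)"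
      using R True by (simp add: powr_mult)
    then show ?thesis using True R by (simp add: ennreal_mult' indicator_def)
  next
    case False
    then show ?thesis
      using R by (auto simp: indicator_def zero_less_mult_iff)
  qed
  have "(\<integral>\<^sup>+y. indicator {0<..<R} y * ennreal (y powr (-1/2) * (R - y) powr a) \<partial>lborel)
      = \<bar>R\<bar> * (\<integral>\<^sup>+t. indicator {0<..<R} (0 + R * t)
               * ennreal ((0 + R * t) powr (-1/2) * (R - (0 + R * t)) powr a) \<partial>lborel)"
    by (rule nn_integral_real_affine) (use R in auto)
  also have "\<dots> = ennreal R * (ennreal (R powr (a - 1/2)) * ennreal (Beta (1/2) (a + 1)))"
    using R by (simp only: add_0_left rescale abs_of_pos) (simp add: nn_integral_cmult Beta[simplified])
  also have "\<dots> = ennreal (Beta (1/2) (a + 1) * R powr (a + 1/2))"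
  proof -
    have "R powr (a + 1/2) = R * R powr (a - 1/2)"
      using powr_add[of R 1 "a - 1/2"] R by (simp add: add.commute)
    then show ?thesis
      using R by (simp add: ennreal_mult''[symmetric] mult_ac) (simp add: ennreal_mult'[symmetric])
  qed
  finally show ?thesis .
qed

definition dirichlet_const :: "nat \<Rightarrow> real \<Rightarrow> real" where
  "dirichlet_const m a = (\<Prod>j<m. Beta (1/2) (a + 1 + real j / 2))"

lemma dirichlet_const_Suc:
  "dirichlet_const (Suc m) a = Beta (1/2) (a + 1) * dirichlet_const m (a + 1/2)"
  unfolding dirichlet_const_def prod.lessThan_Suc_shift
  by (simp add: algebra_simps add_divide_distrib)

lemma dirichlet_const_nonneg: "a > -1 \<Longrightarrow> dirichlet_const m a \<ge> 0"
  unfolding dirichlet_const_def by (intro prod_nonneg less_imp_le Beta_real_pos) auto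

definition dirichlet_weight ::
    "(real \<Rightarrow> real) \<Rightarrow> nat \<Rightarrow> real \<Rightarrow> real \<Rightarrow> (nat \<Rightarrow> real) \<Rightarrow> ennreal" where
  "dirichlet_weight f m a r x =
     (if (\<forall>k\<in>{1..m}. 0 < x k) \<and> (\<Sum>k=1..m. x k) < r then
        (\<Prod>k=1..m. inverse (ennreal (f (x k))))
        * ennreal ((\<Prod>k=1..m. x k powr (-1/2)) * (r - (\<Sum>k=1..m. x k)) powr a)
      else 0)"

lemma borel_measurable_dirichlet_weight:
  assumes [measurable]: "f \<in> borel_measurable borel"
  shows "dirichlet_weight f m a r \<in> borel_measurable (\<Pi>\<^sub>M k\<in>{1..m}. borel)"
  unfolding dirichlet_weight_def by measurable

lemma prod_atLeast1_atMost_Suc_fun_upd: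
  fixes g :: "'b \<Rightarrow> 'c::comm_monoid_mult"
  shows "(\<Prod>k=1..Suc m. g ((x(Suc m := y)) k)) = (\<Prod>k=1..m. g (x k)) * g y"
proof -
  have "(\<Prod>k=1..m. g ((x(Suc m := y)) k)) = (\<Prod>k=1..m. g (x k))"
    by (rule prod.cong) auto
  then show ?thesis by (simp add: atLeastAtMostSuc_conv mult.commute)
qed

lemma sum_atLeast1_atMost_Suc_fun_upd:
  fixes x :: "nat \<Rightarrow> 'b::comm_monoid_add"
  shows "(\<Sum>k=1..Suc m. (x(Suc m := y)) k) = (\<Sum>k=1..m. x k) + y"
proof -
  have "(\<Sum>k=1..m. (x(Suc m := y)) k) = (\<Sum>k=1..m. x k)"
    by (rule sum.cong) auto
  then show ?thesis by (simp add: atLeastAtMostSuc_conv add.commute)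
qed

lemma ennreal_mult_inverse_le_1: "ennreal c * inverse (ennreal c) \<le> 1"
  by (cases "c > 0") (auto simp: inverse_ennreal ennreal_mult''[symmetric] ennreal_neg)

lemma nn_integral_dirichlet_weight_fun_upd_le:
  assumes [measurable]: "f \<in> borel_measurable borel" and a: "a > -1"
    and x: "x \<in> space (\<Pi>\<^sub>M k\<in>{1..m}. borel)"
  shows "(\<integral>\<^sup>+y. dirichlet_weight f (Suc m) a r (x(Suc m := y)) \<partial>density lborel f)
      \<le> ennreal (Beta (1/2) (a + 1)) * dirichlet_weight f m (a + 1/2) r x"
proof (cases "(\<forall>k\<in>{1..m}. 0 < x k) \<and> (\<Sum>k=1..m. x k) < r")
  case False
  then have "dirichlet_weight f (Suc m) a r (x(Suc m := y)) = 0" for y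
    unfolding dirichlet_weight_def sum_atLeast1_atMost_Suc_fun_upd
    by (auto simp: atLeastAtMostSuc_conv split: if_splits)
  then show ?thesis by simp
next
  case True
  define R where "R = r - (\<Sum>k=1..m. x k)"
  have R: "R > 0" using True R_def by simp
  define Q where "Q = (\<Prod>k=1..m. inverse (ennreal (f (x k))))
                      * ennreal (\<Prod>k=1..m. x k powr (-1/2))"
  have "(\<lambda>y. x(Suc m := y)) \<in> measurable borel (\<Pi>\<^sub>M k\<in>insert (Suc m) {1..m}. borel)"
    by (rule measurable_component_update[OF x]) auto
  then have [measurable]: "(\<lambda>y. dirichlet_weight f (Suc m) a r (x(Suc m := y))) \<in> borel_measurable borel"
    using borel_measurable_dirichlet_weight[of f "Suc m" a r]
    by (simp add: atLeastAtMostSuc_conv)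
  have pointwise: "ennreal (f y) * dirichlet_weight f (Suc m) a r (x(Suc m := y))
      \<le> Q * (indicator {0<..<R} y * ennreal (y powr (-1/2) * (R - y) powr a))" for y
  proof (cases "0 < y \<and> y < R")
    case y: True
    have "dirichlet_weight f (Suc m) a r (x(Suc m := y))
        = Q * inverse (ennreal (f y)) * ennreal (y powr (-1/2) * (R - y) powr a)"
      using True y
      unfolding dirichlet_weight_def Q_def prod_atLeast1_atMost_Suc_fun_upd
        sum_atLeast1_atMost_Suc_fun_upd R_def
      by (auto simp: ennreal_mult'' mult_ac prod_nonneg diff_diff_eq atLeastAtMostSuc_conv)
    then have "ennreal (f y) * dirichlet_weight f (Suc m) a r (x(Suc m := y))
        = (ennreal (f y) * inverse (ennreal (f y))) * (Q * ennreal (y powr (-1/2) * (R - y) powr a))"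
      by (simp add: mult_ac)
    also have "\<dots> \<le> Q * ennreal (y powr (-1/2) * (R - y) powr a)"
      using mult_right_mono[OF ennreal_mult_inverse_le_1] by fastforce
    finally show ?thesis using y by simp
  next
    case False
    then have "dirichlet_weight f (Suc m) a r (x(Suc m := y)) = 0"
      unfolding dirichlet_weight_def sum_atLeast1_atMost_Suc_fun_upd R_def
      by (auto simp: atLeastAtMostSuc_conv)
    then show ?thesis by simp
  qed
  have "(\<integral>\<^sup>+y. dirichlet_weight f (Suc m) a r (x(Suc m := y)) \<partial>density lborel f)
      = (\<integral>\<^sup>+y. ennreal (f y) * dirichlet_weight f (Suc m) a r (x(Suc m := y)) \<partial>lborel)"
    by (rule nn_integral_density) auto
  also have "\<dots> \<le> (\<integral>\<^sup>+y. Q * (indicator {0<..<R} y * ennreal (y powr (-1/2) * (R - y) powr a)) \<partial>lborel)"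
    by (intro nn_integral_mono pointwise)
  also have "\<dots> = Q * ennreal (Beta (1/2) (a + 1) * R powr (a + 1/2))"
    using nn_integral_powr_Beta[OF R a] by (simp add: nn_integral_cmult)
  also have "\<dots> = ennreal (Beta (1/2) (a + 1)) * dirichlet_weight f m (a + 1/2) r x"
    using True Beta_real_pos[of "1/2" "a + 1"] a unfolding dirichlet_weight_def Q_def R_def
    by (simp add: ennreal_mult'' ennreal_mult' mult_ac prod_nonneg)
  finally show ?thesis .
qed

lemma nn_integral_dirichlet_weight_le:
  assumes [measurable]: "f \<in> borel_measurable borel"
    and prob: "prob_space (density lborel f)" and "a > -1"
  shows "(\<integral>\<^sup>+x. dirichlet_weight f m a r x \<partial>(\<Pi>\<^sub>M k\<in>{1..m}. density lborel f))
      \<le> ennreal (dirichlet_const m a * r powr (a + m/2))"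
  using \<open>a > -1\<close>
proof (induction m arbitrary: a)
  case 0
  then show ?case
    by (simp add: dirichlet_weight_def dirichlet_const_def PiM_empty nn_integral_count_space_finite)
next
  case (Suc m)
  let ?P = "density lborel f"
  interpret product_sigma_finite "\<lambda>_::nat. ?P"
    using prob by (simp add: product_sigma_finite_def prob_space_imp_sigma_finite)
  have sets_PiM: "sets (\<Pi>\<^sub>M k\<in>I. ?P) = sets (\<Pi>\<^sub>M k\<in>I. borel)" for I :: "nat set"
    by (rule sets_PiM_cong) auto
  have [measurable]: "dirichlet_weight f n b r \<in> borel_measurable (\<Pi>\<^sub>M k\<in>{1..n}. ?P)" for n b
    using borel_measurable_dirichlet_weight[of f n b r] by (simp add: measurable_cong_sets[OF sets_PiM])
  have "(\<integral>\<^sup>+x. dirichlet_weight f (Suc m) a r x \<partial>(\<Pi>\<^sub>M k\<in>{1..Suc m}. ?P))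
      = (\<integral>\<^sup>+x. (\<integral>\<^sup>+y. dirichlet_weight f (Suc m) a r (x(Suc m := y)) \<partial>?P) \<partial>(\<Pi>\<^sub>M k\<in>{1..m}. ?P))"
  proof -
    have "{1..Suc m} = insert (Suc m) {1..m}" by auto
    moreover have "dirichlet_weight f (Suc m) a r \<in> borel_measurable (\<Pi>\<^sub>M k\<in>{1..Suc m}. ?P)"
      by measurable
    ultimately show ?thesis by (simp add: product_nn_integral_insert)
  qed
  also have "\<dots> \<le> (\<integral>\<^sup>+x. ennreal (Beta (1/2) (a + 1)) * dirichlet_weight f m (a + 1/2) r x
                     \<partial>(\<Pi>\<^sub>M k\<in>{1..m}. ?P))"
    using Suc.prems
    by (intro nn_integral_mono nn_integral_dirichlet_weight_fun_upd_le) (auto simp: space_PiM)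
  also have "\<dots> = ennreal (Beta (1/2) (a + 1))
                  * (\<integral>\<^sup>+x. dirichlet_weight f m (a + 1/2) r x \<partial>(\<Pi>\<^sub>M k\<in>{1..m}. ?P))"
    by (rule nn_integral_cmult) measurable
  also have "\<dots> \<le> ennreal (Beta (1/2) (a + 1)) * ennreal (dirichlet_const m (a + 1/2) * r powr (a + 1/2 + m/2))"
    using Suc by (intro mult_left_mono) auto
  also have "\<dots> = ennreal (dirichlet_const (Suc m) a * r powr (a + Suc m / 2))"
    using Beta_real_pos[of "1/2" "a + 1"] Suc.prems
    by (simp add: dirichlet_const_Suc ennreal_mult'[symmetric] mult_ac add_divide_distrib add.assoc)
  finally show ?case .
qed

lemma Beta_half_mult_Beta_half:
  fixes b :: real
  assumes "b > 0"
  shows "Beta (1/2) b * Beta (1/2) (b + 1/2) = pi / b"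
proof -
  have "Gamma b > 0" "Gamma (b + 1/2) > 0"
    using assms by (auto intro: Gamma_real_pos)
  then have "Gamma b \<noteq> 0" "Gamma (b + 1/2) \<noteq> 0"
    by (auto simp del: Gamma_eq_zero_iff)
  moreover have "1/2 + b = b + 1/2" "1/2 + (b + 1/2) = b + 1" by simp_all
  ultimately have "Beta (1/2) b * Beta (1/2) (b + 1/2) = Gamma (1/2) ^ 2 * Gamma b / Gamma (b + 1)"
    unfolding Beta_def by (simp only:) (simp add: power2_eq_square)
  also have "Gamma (b + 1) = b * Gamma b"
    using Gamma_plus1[of b] assms nonpos_Ints_nonpos[of b] by force
  finally show ?thesis
    using assms \<open>Gamma b \<noteq> 0\<close> by (simp add: Gamma_one_half_real)
qed

lemma Beta_half_square_le:
  fixes b :: real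
  assumes "b > 0"
  shows "Beta (1/2) (b + 1/2) ^ 2 \<le> pi / b"
proof -
  have "Beta (1/2) (b + 1/2) \<le> Beta (1/2) b"
    by (rule Beta_real_mono) (use assms in auto)
  moreover have "Beta (1/2) (b + 1/2) > 0"
    using assms by (intro Beta_real_pos) auto
  ultimately have "Beta (1/2) (b + 1/2) ^ 2 \<le> Beta (1/2) b * Beta (1/2) (b + 1/2)"
    by (simp add: power2_eq_square)
  then show ?thesis
    using Beta_half_mult_Beta_half[OF assms] by simp
qed

lemma summable_power_dirichlet_const:
  fixes C :: real
  assumes C: "C > 0"
  shows "summable (\<lambda>n. C ^ n * dirichlet_const n (-1/2))"
proof -
  obtain N :: nat where N: "8 * pi * C^2 < real N"
    using reals_Archimedean2 by blast
  show ?thesis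
  proof (rule summable_ratio_test[of "1/2" N])
    fix n assume "n \<ge> N"
    then have n: "8 * pi * C^2 < real n" using N by linarith
    moreover have "8 * pi * C^2 \<ge> 0" by simp
    ultimately have n_pos: "real n > 0" by linarith
    define B where "B = Beta (1/2) (real n / 2 + 1/2)"
    have B_pos: "B > 0" unfolding B_def by (intro Beta_real_pos) auto
    have "(C * B)^2 \<le> C^2 * (pi / (real n / 2))"
      unfolding B_def power_mult_distrib using Beta_half_square_le[of "real n / 2"] n_pos
      by (intro mult_left_mono) auto
    also have "\<dots> \<le> (1/2)^2"
      using n n_pos by (simp add: field_simps)
    finally have CB: "C * B \<le> 1/2"
      by (rule power2_le_imp_le) simp
    have D: "dirichlet_const n (-1/2) \<ge> 0"
      by (rule dirichlet_const_nonneg) simp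
    then have nonneg: "C ^ n * dirichlet_const n (-1/2) \<ge> 0"
      using C by simp
    have "C ^ Suc n * dirichlet_const (Suc n) (-1/2) = (C ^ n * dirichlet_const n (-1/2)) * (C * B)"
      unfolding dirichlet_const_def B_def by (simp add: algebra_simps)
    moreover have "\<dots> \<le> (C ^ n * dirichlet_const n (-1/2)) * (1/2)"
      by (rule mult_left_mono[OF CB nonneg])
    ultimately show "norm (C ^ Suc n * dirichlet_const (Suc n) (-1/2))
        \<le> 1/2 * norm (C ^ n * dirichlet_const n (-1/2))"
      using C B_pos D by (simp add: abs_mult mult_ac)
  qed simp
qed

(* The increments Delta_1, ..., Delta_(n+1) on the event {N = n}, where tau_i = x i. *)
definition renewal_increment :: "nat \<Rightarrow> (nat \<Rightarrow> real) \<Rightarrow> nat \<Rightarrow> real" where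
  "renewal_increment n x k = (if k \<le> n then x k else 1 - (\<Sum>i=1..n. x i))"

(* The integrand restricted to the event {N = n}, as a function of tau_1, ..., tau_(n+1). *)
definition renewal_term ::
    "(real \<Rightarrow> real) \<Rightarrow> (real \<Rightarrow> real) \<Rightarrow> real \<Rightarrow> nat \<Rightarrow> (nat \<Rightarrow> real) \<Rightarrow> ennreal" where
  "renewal_term f F C n x =
     (if (\<forall>k\<in>{1..Suc n}. 0 < x k) \<and> (\<Sum>k=1..n. x k) < 1 \<and> 1 \<le> (\<Sum>k=1..Suc n. x k) then
        ennreal C ^ n / ennreal (1 - F (1 - (\<Sum>k=1..n. x k)))
        * (\<Prod>k=1..n. 1 / (ennreal (f (renewal_increment n x k))
                           * ennreal (sqrt (renewal_increment n x (k + 1)))))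
      else 0)"

lemma borel_measurable_renewal_increment [measurable]:
  assumes "k \<in> {1..Suc n}"
  shows "(\<lambda>x. renewal_increment n x k) \<in> borel_measurable (\<Pi>\<^sub>M i\<in>{1..Suc n}. borel)"
proof (cases "k \<le> n")
  case True
  then have "(\<lambda>x. renewal_increment n x k) = (\<lambda>x. x k)"
    by (auto simp: renewal_increment_def)
  then show ?thesis using assms by simp
next
  case False
  then have "(\<lambda>x. renewal_increment n x k) = (\<lambda>x. 1 - (\<Sum>i=1..n. x i))"
    by (auto simp: renewal_increment_def)
  then show ?thesis by simp
qed

lemma borel_measurable_renewal_term:
  assumes [measurable]: "f \<in> borel_measurable borel" "F \<in> borel_measurable borel"
  shows "renewal_term f F C n \<in> borel_measurable (\<Pi>\<^sub>M i\<in>{1..Suc n}. borel)"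
  unfolding renewal_term_def by measurable

lemma prod_renewal_increment_powr_le:
  assumes pos: "\<forall>k\<in>{1..n}. 0 < x k" and sum: "(\<Sum>k=1..n. x k) < 1"
  shows "(\<Prod>k=1..n. renewal_increment n x (k + 1) powr (-1/2))
      \<le> (\<Prod>k=1..n. x k powr (-1/2)) * (1 - (\<Sum>k=1..n. x k)) powr (-1/2)"
proof (cases "n = 0")
  case False
  have "(\<Prod>k=1..n. renewal_increment n x (k + 1) powr (-1/2))
      = (\<Prod>k=Suc 1..Suc n. renewal_increment n x k powr (-1/2))"
    using prod.shift_bounds_cl_Suc_ivl[of "\<lambda>k. renewal_increment n x k powr (-1/2)" 1 n] by simp
  also have "\<dots> = (\<Prod>k=2..n. x k powr (-1/2)) * (1 - (\<Sum>k=1..n. x k)) powr (-1/2)"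
    using False by (simp add: atLeastAtMostSuc_conv renewal_increment_def numeral_2_eq_2 mult.commute)
  also have "\<dots> \<le> x 1 powr (-1/2) * ((\<Prod>k=2..n. x k powr (-1/2)) * (1 - (\<Sum>k=1..n. x k)) powr (-1/2))"
  proof -
    have "x 1 \<le> (\<Sum>k=1..n. x k)"
      using pos False by (intro member_le_sum) (auto intro: less_imp_le)
    then have "x 1 powr (-1/2) \<ge> 1"
      using pos False sum powr_mono2'[of "-1/2" "x 1" 1] by simp
    from mult_right_mono[OF this, of "(\<Prod>k=2..n. x k powr (-1/2)) * (1 - (\<Sum>k=1..n. x k)) powr (-1/2)"]
    show ?thesis by (simp add: prod_nonneg)
  qed
  also have "\<dots> = (\<Prod>k=1..n. x k powr (-1/2)) * (1 - (\<Sum>k=1..n. x k)) powr (-1/2)"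
    using False by (simp add: prod.atLeast_Suc_atMost numeral_2_eq_2)
  finally show ?thesis .
qed simp

lemma prod_renewal_increment_le:
  assumes pos: "\<forall>k\<in>{1..n}. 0 < x k" and sum: "(\<Sum>k=1..n. x k) < 1"
  shows "(\<Prod>k=1..n. 1 / (ennreal (f (renewal_increment n x k)) * ennreal (sqrt (renewal_increment n x (k + 1)))))
     \<le> (\<Prod>k=1..n. inverse (ennreal (f (x k))))
        * ennreal ((\<Prod>k=1..n. x k powr (-1/2)) * (1 - (\<Sum>k=1..n. x k)) powr (-1/2))"
proof -
  have increment_pos: "renewal_increment n x (k + 1) > 0" if "k \<in> {1..n}" for k
    using pos sum that by (auto simp: renewal_increment_def)
  have "1 / (ennreal (f (renewal_increment n x k)) * ennreal (sqrt (renewal_increment n x (k + 1))))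
      = inverse (ennreal (f (x k))) * ennreal (renewal_increment n x (k + 1) powr (-1/2))"
    if k: "k \<in> {1..n}" for k
    using k increment_pos[OF k]
    by (simp add: renewal_increment_def divide_ennreal_def ennreal_inverse_mult' inverse_ennreal
                  powr_minus powr_half_sqrt)
  then have "(\<Prod>k=1..n. 1 / (ennreal (f (renewal_increment n x k)) * ennreal (sqrt (renewal_increment n x (k + 1)))))
      = (\<Prod>k=1..n. inverse (ennreal (f (x k)))) * ennreal (\<Prod>k=1..n. renewal_increment n x (k + 1) powr (-1/2))"
    by (simp add: prod.distrib prod_ennreal)
  also have "\<dots> \<le> (\<Prod>k=1..n. inverse (ennreal (f (x k))))
        * ennreal ((\<Prod>k=1..n. x k powr (-1/2)) * (1 - (\<Sum>k=1..n. x k)) powr (-1/2))"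
    by (intro mult_left_mono ennreal_leI prod_renewal_increment_powr_le[OF pos sum]) simp
  finally show ?thesis .
qed

lemma mono_cdf_density:
  assumes "prob_space (density lborel f)"
  shows "mono (cdf (density lborel f))"
proof -
  interpret prob_space "density lborel f" by fact
  interpret finite_borel_measure "density lborel f" by unfold_locales simp
  show ?thesis by (rule monoI) (rule cdf_nondecreasing)
qed

lemma emeasure_density_atLeast_eq_cdf:
  fixes f :: "real \<Rightarrow> real"
  assumes [measurable]: "f \<in> borel_measurable borel" and "prob_space (density lborel f)"
  shows "emeasure (density lborel f) {d..} = ennreal (1 - cdf (density lborel f) d)"
proof -
  let ?P = "density lborel f"
  interpret prob_space ?P by fact
  have "emeasure ?P {d} = 0"
    by (subst emeasure_density) (auto simp: nn_integral_cmult_indicator)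
  then have "emeasure ?P {d..} = emeasure ?P {d<..}"
    using emeasure_Un_null_set[of "{d<..}" ?P "{d}"]
    by (simp add: null_sets_def insert_absorb flip: ivl_disj_un_singleton(1))
  also have "\<dots> = emeasure ?P (space ?P - {..d})"
    by (rule arg_cong[where f = "emeasure ?P"]) auto
  also have "\<dots> = ennreal (1 - cdf ?P d)"
    using prob_space
    by (subst emeasure_compl)
       (auto simp: cdf_def emeasure_eq_measure ennreal_1[symmetric] ennreal_minus simp del: ennreal_1)
  finally show ?thesis .
qed

lemma nn_integral_renewal_term_fun_upd_le:
  fixes f :: "real \<Rightarrow> real" and C :: real
  assumes [measurable]: "f \<in> borel_measurable borel"
    and prob: "prob_space (density lborel f)" and cdf_1: "cdf (density lborel f) 1 < 1"
    and C: "C \<ge> 0"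
  shows "(\<integral>\<^sup>+y. renewal_term f (cdf (density lborel f)) C n (x(Suc n := y)) \<partial>density lborel f)
      \<le> ennreal (C ^ n) * dirichlet_weight f n (-1/2) 1 x"
proof (cases "(\<forall>k\<in>{1..n}. 0 < x k) \<and> (\<Sum>k=1..n. x k) < 1")
  case False
  then have "renewal_term f F C n (x(Suc n := y)) = 0" for F y
    by (auto simp: renewal_term_def atLeastAtMostSuc_conv)
  then show ?thesis by simp
next
  case True
  let ?P = "density lborel f" and ?F = "cdf (density lborel f)"
  define d where "d = 1 - (\<Sum>k=1..n. x k)"
  have "(\<Sum>k=1..n. x k) \<ge> 0"
    using True by (intro sum_nonneg) (auto intro: less_imp_le)
  then have d: "0 < d" "d \<le> 1" using True d_def by auto
  have tail_pos: "1 - ?F d > 0"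
    using cdf_1 monoD[OF mono_cdf_density[OF prob] d(2)] by simp
  define W where "W = (\<Prod>k=1..n. 1 / (ennreal (f (renewal_increment n x k))
                                         * ennreal (sqrt (renewal_increment n x (k + 1)))))"
  have sum_upd: "(\<Sum>k=1..n. (x(Suc n := y)) k) = (\<Sum>k=1..n. x k)" for y
    by (rule sum.cong) auto
  then have "renewal_increment n (x(Suc n := y)) = renewal_increment n x" for y
    by (intro ext) (simp add: renewal_increment_def)
  then have "renewal_term f ?F C n (x(Suc n := y)) = ennreal C ^ n / ennreal (1 - ?F d) * W * indicator {d..} y"
    for y
    using True d sum_upd unfolding renewal_term_def sum_atLeast1_atMost_Suc_fun_upd W_def d_def
    by (auto simp: atLeastAtMostSuc_conv indicator_def)
  then have "(\<integral>\<^sup>+y. renewal_term f ?F C n (x(Suc n := y)) \<partial>?P)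
      = ennreal C ^ n / ennreal (1 - ?F d) * W * emeasure ?P {d..}"
    by (simp add: nn_integral_cmult_indicator)
  also have "\<dots> = ennreal C ^ n * W * (inverse (ennreal (1 - ?F d)) * ennreal (1 - ?F d))"
    by (simp add: emeasure_density_atLeast_eq_cdf prob divide_ennreal_def mult_ac)
  also have "\<dots> = ennreal C ^ n * W"
    using tail_pos by (simp add: inverse_ennreal ennreal_mult''[symmetric])
  also have "\<dots> \<le> ennreal C ^ n * ((\<Prod>k=1..n. inverse (ennreal (f (x k))))
      * ennreal ((\<Prod>k=1..n. x k powr (-1/2)) * (1 - (\<Sum>k=1..n. x k)) powr (-1/2)))"
    unfolding W_def using True by (intro mult_left_mono prod_renewal_increment_le) auto
  also have "\<dots> = ennreal (C ^ n) * dirichlet_weight f n (-1/2) 1 x"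
    using True C by (simp add: dirichlet_weight_def ennreal_power)
  finally show ?thesis .
qed

lemma nn_integral_renewal_term_le:
  fixes f :: "real \<Rightarrow> real" and C :: real
  assumes [measurable]: "f \<in> borel_measurable borel"
    and prob: "prob_space (density lborel f)" and cdf_1: "cdf (density lborel f) 1 < 1"
    and C: "C \<ge> 0"
  shows "(\<integral>\<^sup>+x. renewal_term f (cdf (density lborel f)) C n x \<partial>(\<Pi>\<^sub>M k\<in>{1..Suc n}. density lborel f))
      \<le> ennreal (C ^ n * dirichlet_const n (-1/2))"
proof -
  let ?P = "density lborel f" and ?F = "cdf (density lborel f)"
  interpret product_sigma_finite "\<lambda>_::nat. ?P"
    by (simp add: product_sigma_finite_def prob_space_imp_sigma_finite prob)
  have [measurable]: "?F \<in> borel_measurable borel"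
    using mono_cdf_density[OF prob] by (rule borel_measurable_mono)
  have sets_PiM: "sets (\<Pi>\<^sub>M k\<in>I. ?P) = sets (\<Pi>\<^sub>M k\<in>I. borel)" for I :: "nat set"
    by (rule sets_PiM_cong) auto
  have "(\<integral>\<^sup>+x. renewal_term f ?F C n x \<partial>(\<Pi>\<^sub>M k\<in>{1..Suc n}. ?P))
      = (\<integral>\<^sup>+x. (\<integral>\<^sup>+y. renewal_term f ?F C n (x(Suc n := y)) \<partial>?P) \<partial>(\<Pi>\<^sub>M k\<in>{1..n}. ?P))"
  proof -
    have "{1..Suc n} = insert (Suc n) {1..n}" by auto
    moreover have "renewal_term f ?F C n \<in> borel_measurable (\<Pi>\<^sub>M k\<in>{1..Suc n}. ?P)"
      using borel_measurable_renewal_term[of f ?F C n] by (simp add: measurable_cong_sets[OF sets_PiM])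
    ultimately show ?thesis by (simp add: product_nn_integral_insert)
  qed
  also have "\<dots> \<le> (\<integral>\<^sup>+x. ennreal (C ^ n) * dirichlet_weight f n (-1/2) 1 x \<partial>(\<Pi>\<^sub>M k\<in>{1..n}. ?P))"
    by (intro nn_integral_mono nn_integral_renewal_term_fun_upd_le prob cdf_1 C) measurable
  also have "\<dots> = ennreal (C ^ n) * (\<integral>\<^sup>+x. dirichlet_weight f n (-1/2) 1 x \<partial>(\<Pi>\<^sub>M k\<in>{1..n}. ?P))"
    using borel_measurable_dirichlet_weight[of f n "-1/2" 1]
    by (intro nn_integral_cmult) (simp add: measurable_cong_sets[OF sets_PiM])
  also have "\<dots> \<le> ennreal (C ^ n) * ennreal (dirichlet_const n (-1/2))"
    using nn_integral_dirichlet_weight_le[OF _ prob, of "-1/2" n 1] by (intro mult_left_mono) auto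
  also have "\<dots> = ennreal (C ^ n * dirichlet_const n (-1/2))"
    using C dirichlet_const_nonneg[of "-1/2" n] by (simp add: ennreal_mult)
  finally show ?thesis .
qed

lemma exists_first_crossing:
  fixes s :: "nat \<Rightarrow> real"
  assumes "s 0 < 1" and "\<exists>m. 1 \<le> s m"
  obtains n where "s n < 1" and "1 \<le> s (Suc n)"
proof -
  have "\<exists>n. s n < 1 \<and> 1 \<le> s (Suc n)"
  proof (rule ccontr)
    assume "\<nexists>n. s n < 1 \<and> 1 \<le> s (Suc n)"
    then have "s n < 1" for n
      using assms(1) by (induction n) (auto simp: not_le)
    then show False using assms(2) by (meson not_le)
  qed
  then show ?thesis using that by blast
qed

lemma renewal_N_Delta_eq:
  fixes \<tau> :: "nat \<Rightarrow> 'a \<Rightarrow> real"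
  assumes pos: "\<And>k. k \<ge> 1 \<Longrightarrow> \<tau> k \<omega> > 0"
    and below: "(\<Sum>i=1..n. \<tau> i \<omega>) < 1" and above: "1 \<le> (\<Sum>i=1..Suc n. \<tau> i \<omega>)"
  shows "renewal_N \<tau> \<omega> = n"
    and "k \<in> {1..Suc n} \<Longrightarrow> renewal_Delta \<tau> k \<omega> = renewal_increment n (\<lambda>i. \<tau> i \<omega>) k"
proof -
  define S where "S k = (\<Sum>i=1..k. \<tau> i \<omega>)" for k
  have "S k \<le> S m" if "k \<le> m" for k m
    unfolding S_def by (rule sum_mono2) (use that pos in \<open>auto intro: less_imp_le\<close>)
  then have S_less_1: "S k < 1 \<longleftrightarrow> k \<le> n" for k
    using below above unfolding S_def[symmetric] by (metis not_less_eq_eq order.strict_trans2 not_le)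
  have T: "renewal_T \<tau> k \<omega> = (if k \<le> n then S k else 1)" for k
    using S_less_1[of k] unfolding renewal_T_def S_def[symmetric] by auto
  have "{k. renewal_T \<tau> k \<omega> < 1} = {..n}"
    using S_less_1 by (auto simp: T)
  then show "renewal_N \<tau> \<omega> = n"
    unfolding renewal_N_def by (auto intro!: Max_eqI)
  assume k: "k \<in> {1..Suc n}"
  then obtain j where j: "k = Suc j" by (cases k) auto
  show "renewal_Delta \<tau> k \<omega> = renewal_increment n (\<lambda>i. \<tau> i \<omega>) k"
    using k unfolding renewal_Delta_def renewal_increment_def T j
    by (cases "j = n") (auto simp: S_def)
qed

definition renewal_functional ::
    "(real \<Rightarrow> real) \<Rightarrow> (real \<Rightarrow> real) \<Rightarrow> real \<Rightarrow> (nat \<Rightarrow> 'a \<Rightarrow> real) \<Rightarrow> 'a \<Rightarrow> ennreal" where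
  "renewal_functional f F C \<tau> \<omega> =
     ennreal C ^ renewal_N \<tau> \<omega> / ennreal (1 - F (renewal_Delta \<tau> (renewal_N \<tau> \<omega> + 1) \<omega>))
     * (\<Prod>k=1..renewal_N \<tau> \<omega>. 1 / (ennreal (f (renewal_Delta \<tau> k \<omega>))
                                      * ennreal (sqrt (renewal_Delta \<tau> (k + 1) \<omega>))))"

lemma renewal_functional_eq_renewal_term:
  fixes \<tau> :: "nat \<Rightarrow> 'a \<Rightarrow> real"
  assumes pos: "\<And>k. k \<ge> 1 \<Longrightarrow> \<tau> k \<omega> > 0"
    and below: "(\<Sum>i=1..n. \<tau> i \<omega>) < 1" and above: "1 \<le> (\<Sum>i=1..Suc n. \<tau> i \<omega>)"
  shows "renewal_functional f F C \<tau> \<omega> = renewal_term f F C n (\<lambda>i\<in>{1..Suc n}. \<tau> i \<omega>)"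
proof -
  let ?x = "\<lambda>i\<in>{1..Suc n}. \<tau> i \<omega>"
  have sum_x: "(\<Sum>i=1..m. ?x i) = (\<Sum>i=1..m. \<tau> i \<omega>)" if "m \<le> Suc n" for m
    using that by (intro sum.cong) auto
  have increment: "renewal_increment n ?x k = renewal_Delta \<tau> k \<omega>" if "k \<in> {1..Suc n}" for k
    using that renewal_N_Delta_eq(2)[where \<tau> = \<tau> and \<omega> = \<omega>, OF pos below above that]
    by (simp add: renewal_increment_def sum_x)
  have "(\<Prod>k=1..n. 1 / (ennreal (f (renewal_Delta \<tau> k \<omega>)) * ennreal (sqrt (renewal_Delta \<tau> (k + 1) \<omega>))))
      = (\<Prod>k=1..n. 1 / (ennreal (f (renewal_increment n ?x k)) * ennreal (sqrt (renewal_increment n ?x (k + 1)))))"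
  proof (rule prod.cong[OF refl])
    fix k assume "k \<in> {1..n}"
    then show "1 / (ennreal (f (renewal_Delta \<tau> k \<omega>)) * ennreal (sqrt (renewal_Delta \<tau> (k + 1) \<omega>)))
        = 1 / (ennreal (f (renewal_increment n ?x k)) * ennreal (sqrt (renewal_increment n ?x (k + 1))))"
      using increment[of k] increment[of "k + 1"] by simp
  qed
  moreover have "renewal_Delta \<tau> (n + 1) \<omega> = 1 - (\<Sum>i=1..n. ?x i)"
    using increment[of "Suc n"] by (simp add: renewal_increment_def)
  moreover have "renewal_N \<tau> \<omega> = n"
    using pos below above by (rule renewal_N_Delta_eq(1))
  ultimately show ?thesis
    using pos below above unfolding renewal_functional_def renewal_term_def
    by (simp add: sum_x)
qed

locale iid_with_density = prob_space M
  for M :: "'a measure" and \<tau> :: "nat \<Rightarrow> 'a \<Rightarrow> real" and f :: "real \<Rightarrow> real" +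
  assumes indep: "indep_vars (\<lambda>_. borel) \<tau> {1..}"
    and nonneg: "\<And>i \<omega>. i \<ge> 1 \<Longrightarrow> \<omega> \<in> space M \<Longrightarrow> \<tau> i \<omega> \<ge> 0"
    and f_nonneg: "\<And>x. f x \<ge> 0"
    and pdf: "\<And>i. i \<ge> 1 \<Longrightarrow> distributed M lborel (\<tau> i) (\<lambda>x. ennreal (f x))"
begin

lemma measurable_tau: "i \<ge> 1 \<Longrightarrow> \<tau> i \<in> borel_measurable M"
  using distributed_measurable[OF pdf] by (simp add: measurable_cong_sets[OF refl sets_lborel])

lemma borel_measurable_density [measurable]: "f \<in> borel_measurable borel"
  using distributed_real_measurable[OF _ pdf[of 1]] f_nonneg
  by (simp add: measurable_cong_sets[OF sets_lborel refl])

lemma distr_tau: "i \<ge> 1 \<Longrightarrow> distr M borel (\<tau> i) = density lborel f"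
  using distributed_distr_eq_density[OF pdf] distr_cong[of M M borel lborel "\<tau> i" "\<tau> i"] by simp

lemma prob_space_density: "prob_space (density lborel f)"
  using prob_space_distr[OF measurable_tau[of 1]] distr_tau[of 1] by simp

lemma prob_tau_vimage:
  "i \<ge> 1 \<Longrightarrow> A \<in> sets borel \<Longrightarrow> prob (\<tau> i -` A \<inter> space M) = measure (density lborel f) A"
  using measure_distr[OF measurable_tau, of i A] distr_tau[of i] by simp

lemma AE_tau_pos: "AE \<omega> in M. \<forall>k\<ge>1. \<tau> k \<omega> > 0"
proof -
  have "AE \<omega> in M. \<tau> k \<omega> > 0" if k: "k \<ge> 1" for k
  proof -
    have "emeasure (density lborel f) {0} = 0"
      by (subst emeasure_density) (auto simp: nn_integral_cmult_indicator)
    then have "measure (density lborel f) {0} = 0"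
      by (simp add: measure_def)
    then have "emeasure M (\<tau> k -` {0} \<inter> space M) = 0"
      using prob_tau_vimage[OF k, of "{0}"] by (simp add: emeasure_eq_measure)
    then have "AE \<omega> in M. \<tau> k \<omega> \<noteq> 0"
      using measurable_tau[OF k] by (intro AE_I'[of "\<tau> k -` {0} \<inter> space M"]) auto
    then show "AE \<omega> in M. \<tau> k \<omega> > 0"
      using AE_space by eventually_elim (use nonneg k in \<open>auto simp: less_le\<close>)
  qed
  then have "AE \<omega> in M. k \<ge> 1 \<longrightarrow> \<tau> k \<omega> > 0" for k
    by (cases "k \<ge> 1") auto
  then show ?thesis
    by (simp add: AE_all_countable)
qed

lemma cdf_density_1_less_1:
  assumes "x \<in> rv_support M (\<tau> 1)" and "x > 1"
  shows "cdf (density lborel f) 1 < 1"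
proof -
  interpret P: prob_space "density lborel f" by (rule prob_space_density)
  have "0 < prob {\<omega>\<in>space M. \<tau> 1 \<omega> \<in> ball x (x - 1)}"
    using assms unfolding rv_support_def by auto
  also have "\<dots> \<le> prob (\<tau> 1 -` {1<..} \<inter> space M)"
    using measurable_tau[of 1] by (intro finite_measure_mono) (auto simp: dist_real_def)
  also have "\<dots> = 1 - cdf (density lborel f) 1"
    using prob_tau_vimage[of 1 "{1<..}"] P.prob_compl[of "{..1}"]
    by (simp add: cdf_def Compl_eq_Diff_UNIV[symmetric])
  finally show ?thesis by simp
qed

lemma AE_exists_sum_tau_ge_1:
  assumes cdf_1: "cdf (density lborel f) 1 < 1"
  shows "AE \<omega> in M. \<exists>n. 1 \<le> (\<Sum>i=1..n. \<tau> i \<omega>)"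
proof -
  define Z where "Z = {\<omega>\<in>space M. \<forall>n. (\<Sum>i=1..n. \<tau> i \<omega>) < 1}"
  have [measurable]: "(\<lambda>\<omega>. \<Sum>i=1..n. \<tau> i \<omega>) \<in> borel_measurable M" for n
    by (intro borel_measurable_sum measurable_tau) auto
  have Z_sets: "Z \<in> sets M" unfolding Z_def by measurable
  let ?q = "cdf (density lborel f) 1"
  have "prob Z \<le> ?q ^ n" if "n \<ge> 1" for n
  proof -
    have "Z \<subseteq> (\<Inter>i\<in>{1..n}. \<tau> i -` {..1} \<inter> space M)"
    proof (intro subsetI INT_I)
      fix \<omega> i assume \<omega>: "\<omega> \<in> Z" and i: "i \<in> {1..n}"
      have "\<tau> i \<omega> \<le> (\<Sum>i=1..n. \<tau> i \<omega>)"
        using i \<omega> nonneg by (intro member_le_sum) (auto simp: Z_def)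
      then show "\<omega> \<in> \<tau> i -` {..1} \<inter> space M"
        using \<omega> by (auto simp: Z_def less_imp_le dest: spec[of _ n])
    qed
    moreover have "(\<Inter>i\<in>{1..n}. \<tau> i -` {..1} \<inter> space M) \<in> events"
      using that by (intro sets.finite_INT measurable_sets[OF measurable_tau]) auto
    ultimately have "prob Z \<le> prob (\<Inter>i\<in>{1..n}. \<tau> i -` {..1} \<inter> space M)"
      by (rule finite_measure_mono)
    also have "\<dots> = (\<Prod>i\<in>{1..n}. prob (\<tau> i -` {..1} \<inter> space M))"
      using that by (intro indep_varsD[OF indep]) auto
    also have "\<dots> = ?q ^ n"
      by (simp add: prob_tau_vimage cdf_def)
    finally show ?thesis .
  qed
  moreover have "(\<lambda>n. ?q ^ n) \<longlonglongrightarrow> 0"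
    using cdf_1 by (intro LIMSEQ_power_zero) (simp add: cdf_def)
  ultimately have "prob Z \<le> 0"
    by (intro LIMSEQ_le_const) auto
  then have "Z \<in> null_sets M"
    using Z_sets by (simp add: null_sets_def emeasure_eq_measure measure_le_0_iff)
  then have "AE \<omega> in M. \<omega> \<notin> Z"
    by (rule AE_not_in)
  then show ?thesis
    using AE_space by eventually_elim (auto simp: Z_def not_less)
qed

lemma nn_integral_restrict_tau:
  assumes [measurable]: "g \<in> borel_measurable (\<Pi>\<^sub>M i\<in>{1..Suc n}. borel)"
  shows "(\<integral>\<^sup>+\<omega>. g (\<lambda>i\<in>{1..Suc n}. \<tau> i \<omega>) \<partial>M)
      = (\<integral>\<^sup>+x. g x \<partial>(\<Pi>\<^sub>M i\<in>{1..Suc n}. density lborel f))"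
proof -
  have restrict_measurable [measurable]:
    "(\<lambda>\<omega>. \<lambda>i\<in>{1..Suc n}. \<tau> i \<omega>) \<in> measurable M (\<Pi>\<^sub>M i\<in>{1..Suc n}. borel)"
    by (intro measurable_restrict measurable_tau) auto
  have "indep_vars (\<lambda>_. borel) \<tau> {1..Suc n}"
    by (rule indep_vars_subset[OF indep]) auto
  then have "distr M (\<Pi>\<^sub>M i\<in>{1..Suc n}. borel) (\<lambda>\<omega>. \<lambda>i\<in>{1..Suc n}. \<tau> i \<omega>)
      = (\<Pi>\<^sub>M i\<in>{1..Suc n}. distr M borel (\<tau> i))"
    by (subst (asm) indep_vars_iff_distr_eq_PiM') (auto intro: measurable_tau)
  also have "\<dots> = (\<Pi>\<^sub>M i\<in>{1..Suc n}. density lborel f)"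
    by (rule PiM_cong) (auto simp: distr_tau)
  finally have distr_eq: "distr M (\<Pi>\<^sub>M i\<in>{1..Suc n}. borel) (\<lambda>\<omega>. \<lambda>i\<in>{1..Suc n}. \<tau> i \<omega>)
      = (\<Pi>\<^sub>M i\<in>{1..Suc n}. density lborel f)" .
  have "g \<in> borel_measurable (distr M (\<Pi>\<^sub>M i\<in>{1..Suc n}. borel) (\<lambda>\<omega>. \<lambda>i\<in>{1..Suc n}. \<tau> i \<omega>))"
    using assms by (simp add: measurable_cong_sets[OF sets_distr refl])
  from nn_integral_distr[OF restrict_measurable this] show ?thesis
    unfolding distr_eq by simp
qed

lemma AE_renewal_functional_le_suminf:
  assumes "cdf (density lborel f) 1 < 1"
  shows "AE \<omega> in M. renewal_functional f F C \<tau> \<omega>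
           \<le> (\<Sum>n. renewal_term f F C n (\<lambda>i\<in>{1..Suc n}. \<tau> i \<omega>))"
  using AE_tau_pos AE_exists_sum_tau_ge_1[OF assms]
proof eventually_elim
  case (elim \<omega>)
  let ?term = "\<lambda>n. renewal_term f F C n (\<lambda>i\<in>{1..Suc n}. \<tau> i \<omega>)"
  obtain n where "(\<Sum>i=1..n. \<tau> i \<omega>) < 1" "1 \<le> (\<Sum>i=1..Suc n. \<tau> i \<omega>)"
    using elim exists_first_crossing[of "\<lambda>n. \<Sum>i=1..n. \<tau> i \<omega>"] by auto
  then have "renewal_functional f F C \<tau> \<omega> = ?term n"
    using elim by (intro renewal_functional_eq_renewal_term) auto
  also have "\<dots> \<le> (\<Sum>n. ?term n)"
    using sum_le_suminf[OF summableI, of "{n}" ?term] by simp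
  finally show ?case .
qed

lemma nn_integral_renewal_functional_finite:
  assumes cdf_1: "cdf (density lborel f) 1 < 1" and C: "C > 0"
  shows "(\<integral>\<^sup>+\<omega>. renewal_functional f (cdf (density lborel f)) C \<tau> \<omega> \<partial>M) < \<infinity>"
proof -
  let ?F = "cdf (density lborel f)"
  let ?term = "\<lambda>n \<omega>. renewal_term f ?F C n (\<lambda>i\<in>{1..Suc n}. \<tau> i \<omega>)"
  have [measurable]: "?F \<in> borel_measurable borel"
    using mono_cdf_density[OF prob_space_density] by (rule borel_measurable_mono)
  have "(\<integral>\<^sup>+\<omega>. renewal_functional f ?F C \<tau> \<omega> \<partial>M) \<le> (\<integral>\<^sup>+\<omega>. (\<Sum>n. ?term n \<omega>) \<partial>M)"
    using AE_renewal_functional_le_suminf[OF cdf_1] by (rule nn_integral_mono_AE)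
  also have "\<dots> = (\<Sum>n. \<integral>\<^sup>+\<omega>. ?term n \<omega> \<partial>M)"
    using borel_measurable_renewal_term[of f ?F C]
    by (intro nn_integral_suminf measurable_compose[OF measurable_restrict]) (auto intro: measurable_tau)
  also have "\<dots> \<le> (\<Sum>n. ennreal (C ^ n * dirichlet_const n (-1/2)))"
  proof (intro suminf_le summableI)
    fix n
    have "(\<integral>\<^sup>+\<omega>. ?term n \<omega> \<partial>M)
        = (\<integral>\<^sup>+x. renewal_term f ?F C n x \<partial>(\<Pi>\<^sub>M i\<in>{1..Suc n}. density lborel f))"
      by (intro nn_integral_restrict_tau borel_measurable_renewal_term) measurable
    also have "\<dots> \<le> ennreal (C ^ n * dirichlet_const n (-1/2))"
      using C by (intro nn_integral_renewal_term_le prob_space_density cdf_1) auto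
    finally show "(\<integral>\<^sup>+\<omega>. ?term n \<omega> \<partial>M) \<le> ennreal (C ^ n * dirichlet_const n (-1/2))" .
  qed
  also have "\<dots> = ennreal (\<Sum>n. C ^ n * dirichlet_const n (-1/2))"
    using C dirichlet_const_nonneg[of "-1/2"] summable_power_dirichlet_const[OF C]
    by (intro suminf_ennreal2) auto
  also have "\<dots> < \<infinity>" by simp
  finally show ?thesis .
qed

end

theorem lemma10:
  fixes M :: "'a measure" and \<tau> :: "nat \<Rightarrow> 'a \<Rightarrow> real"
    and f :: "real \<Rightarrow> real" and C :: real
  assumes "prob_space M"
    and indep: "prob_space.indep_vars M (\<lambda>_. borel) \<tau> {1..}"
    and nonneg: "\<And>i \<omega>. i \<ge> 1 \<Longrightarrow> \<omega> \<in> space M \<Longrightarrow> \<tau> i \<omega> \<ge> 0"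
    and f_nonneg: "\<And>x. f x \<ge> 0"
    and pdf: "\<And>i. i \<ge> 1 \<Longrightarrow> distributed M lborel (\<tau> i) (\<lambda>x. ennreal (f x))"
    and supp: "\<exists>\<epsilon>>0. {0..1+\<epsilon>} \<subseteq> rv_support M (\<tau> 1)"
    and "C > 0"
  shows "(\<integral>\<^sup>+ \<omega>. ennreal C ^ renewal_N \<tau> \<omega>
            / ennreal (1 - cdf (distr M borel (\<tau> 1)) (renewal_Delta \<tau> (renewal_N \<tau> \<omega> + 1) \<omega>))
            * (\<Prod>k=1..renewal_N \<tau> \<omega>.
                 1 / (ennreal (f (renewal_Delta \<tau> k \<omega>))
                      * ennreal (sqrt (renewal_Delta \<tau> (k + 1) \<omega>))))
          \<partial>M) < \<infinity>"
proof -
  interpret iid_with_density M \<tau> f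
    using assms by (simp add: iid_with_density_def iid_with_density_axioms_def)
  obtain \<epsilon> where "\<epsilon> > 0" "{0..1+\<epsilon>} \<subseteq> rv_support M (\<tau> 1)"
    using supp by blast
  then have "cdf (density lborel f) 1 < 1"
    by (intro cdf_density_1_less_1[of "1 + \<epsilon>"]) auto
  from nn_integral_renewal_functional_finite[OF this \<open>C > 0\<close>] show ?thesis
    by (simp add: renewal_functional_def distr_tau)
qed

end
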